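(* Let $P_n(x)$ be a real polynomial all of whose roots are real, with distinct roots $p_1<\dots<p_m$ of multiplicities $r_1,\dots,r_m$. Then $$Z=\sum_{1\le i<j\le m}\frac{r_j^{-1}-r_i^{-1}}{p_j-p_i}$$ is a rational function of the coefficients of $P_n(x)$. *)

theory Defs
  imports Complex_Main "HOL-Computational_Algebra.Polynomial" "HOL-Library.Multiset"
begin

definition poly_fun :: "nat \<Rightarrow> ((nat \<Rightarrow> real) \<Rightarrow> real) \<Rightarrow> bool" where
  "poly_fun N f \<longleftrightarrow>
     (\<exists>(E :: (nat \<Rightarrow> nat) set) (c :: (nat \<Rightarrow> nat) \<Rightarrow> real).
        finite E \<and> (\<forall>a. f a = (\<Sum>\<alpha>\<in>E. c \<alpha> * (\<Prod>i<N. a i ^ \<alpha> i))))"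

definition real_rooted :: "real poly \<Rightarrow> bool" where
  "real_rooted P \<longleftrightarrow> (\<forall>z::complex. poly (map_poly of_real P) z = 0 \<longrightarrow> z \<in> \<real>)"

definition root_set :: "real poly \<Rightarrow> real set" where
  "root_set P = {x. poly P x = 0}"

definition mult_pattern :: "real poly \<Rightarrow> nat multiset" where
  "mult_pattern P = image_mset (\<lambda>x. order x P) (mset_set (root_set P))"

definition Zsum :: "real poly \<Rightarrow> real" where
  "Zsum P = (\<Sum>p\<in>root_set P. \<Sum>q\<in>root_set P.
      if p < q then (1 / real (order q P) - 1 / real (order p P)) / (q - p) else 0)"

end

theory Submission
  imports Defs "Jordan_Normal_Form.Determinant" "HOL-Computational_Algebra.Fundamental_Theorem_Algebra"
begin

text \<open>
  Let \<open>P = a \<cdot> G \<cdot> Q\<close> with \<open>Q = \<Prod>(X - p\<^sub>i)\<close> the squarefree part and \<open>G = \<Prod>(X - p\<^sub>i)^(r\<^sub>i - 1)\<close>;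
  then \<open>P' = a \<cdot> G \<cdot> T\<close> with \<open>T = \<Sum> r\<^sub>i \<Prod>\<^bsub>j\<noteq>i\<^esub>(X - p\<^sub>j)\<close>. Once the multiplicity pattern, hence
  \<open>m = deg Q\<close>, is fixed, \<open>(Q, T)\<close> is the unique solution (\<open>Q\<close> monic of degree \<open>m\<close>, \<open>deg T < m\<close>)
  of the linear equation \<open>T P = Q P'\<close>, so by Cramer's rule the coefficients of \<open>Q\<close> and \<open>T\<close> are
  rational functions of those of \<open>P\<close>. Partial fractions give
  \<open>Z = \<Sum>\<^sub>i Q''(p\<^sub>i) / (2 T(p\<^sub>i))\<close>, and a sum \<open>\<Sum>\<^sub>i f(p\<^sub>i)/g(p\<^sub>i)\<close> over the roots of \<open>Q\<close> is the trace
  of \<open>f(C) g(C)\<^sup>-\<^sup>1\<close> for the companion matrix \<open>C\<close> of \<open>Q\<close>, since the Vandermonde matrix of the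
  roots diagonalises \<open>C\<close>. Hence \<open>Z = tr(f(C) adj(g(C))) / det(g(C))\<close>, a quotient of polynomials
  in the coefficients of \<open>P\<close>.
\<close>

section \<open>Rational functions of the coefficients\<close>

lemma poly_fun_sum_monomials:
  assumes "finite X" "\<And>a. f a = (\<Sum>x\<in>X. w x * (\<Prod>i<N. a i ^ e x i))"
  shows "poly_fun N f"
proof -
  let ?c = "\<lambda>\<gamma>. \<Sum>x\<in>{x\<in>X. e x = \<gamma>}. w x"
  have "f a = (\<Sum>\<gamma>\<in>e ` X. ?c \<gamma> * (\<Prod>i<N. a i ^ \<gamma> i))" for a
  proof -
    have "(\<Sum>\<gamma>\<in>e ` X. ?c \<gamma> * (\<Prod>i<N. a i ^ \<gamma> i))
        = (\<Sum>\<gamma>\<in>e ` X. \<Sum>x\<in>{x\<in>X. e x = \<gamma>}. w x * (\<Prod>i<N. a i ^ e x i))"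
      by (simp add: sum_distrib_right)
    also have "\<dots> = (\<Sum>x\<in>X. w x * (\<Prod>i<N. a i ^ e x i))"
      by (rule sum.image_gen[symmetric, OF assms(1)])
    finally show ?thesis using assms(2) by simp
  qed
  with assms(1) show ?thesis
    unfolding poly_fun_def by (intro exI[of _ "e ` X"] exI[of _ ?c]) simp
qed

lemma poly_fun_const: "poly_fun N (\<lambda>a. c)"
  by (rule poly_fun_sum_monomials[where X="{()}" and w="\<lambda>_. c" and e="\<lambda>_ _. 0"]) auto

lemma poly_fun_var:
  assumes "i < N"
  shows "poly_fun N (\<lambda>a. a i)"
proof (rule poly_fun_sum_monomials[where X="{()}" and w="\<lambda>_. 1" and e="\<lambda>_ j. if j = i then 1 else 0"])
  fix a :: "nat \<Rightarrow> real"
  have "(\<Prod>j<N. a j ^ (if j = i then 1 else 0)) = (\<Prod>j<N. if j = i then a j else 1)"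
    by (intro prod.cong) auto
  also have "\<dots> = a i" using assms by (simp add: prod.delta)
  finally show "a i = (\<Sum>x\<in>{()}. 1 * (\<Prod>j<N. a j ^ (if j = i then 1 else 0)))" by simp
qed auto

lemma poly_fun_add:
  assumes "poly_fun N f" "poly_fun N g"
  shows "poly_fun N (\<lambda>a. f a + g a)"
proof -
  obtain E1 c1 where 1: "finite E1" "\<forall>a. f a = (\<Sum>\<alpha>\<in>E1. c1 \<alpha> * (\<Prod>i<N. a i ^ \<alpha> i))"
    using assms(1) unfolding poly_fun_def by blast
  obtain E2 c2 where 2: "finite E2" "\<forall>a. g a = (\<Sum>\<alpha>\<in>E2. c2 \<alpha> * (\<Prod>i<N. a i ^ \<alpha> i))"
    using assms(2) unfolding poly_fun_def by blast
  show ?thesis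
    by (rule poly_fun_sum_monomials[where X="E1 <+> E2" and w="case_sum c1 c2" and e="case_sum id id"])
      (use 1 2 in \<open>auto simp: sum.Plus o_def\<close>)
qed

lemma poly_fun_mult:
  assumes "poly_fun N f" "poly_fun N g"
  shows "poly_fun N (\<lambda>a. f a * g a)"
proof -
  obtain E1 c1 where 1: "finite E1" "\<forall>a. f a = (\<Sum>\<alpha>\<in>E1. c1 \<alpha> * (\<Prod>i<N. a i ^ \<alpha> i))"
    using assms(1) unfolding poly_fun_def by blast
  obtain E2 c2 where 2: "finite E2" "\<forall>a. g a = (\<Sum>\<alpha>\<in>E2. c2 \<alpha> * (\<Prod>i<N. a i ^ \<alpha> i))"
    using assms(2) unfolding poly_fun_def by blast
  show ?thesis
  proof (rule poly_fun_sum_monomials[where X="E1 \<times> E2" and w="\<lambda>(\<alpha>,\<beta>). c1 \<alpha> * c2 \<beta>"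
        and e="\<lambda>(\<alpha>,\<beta>) i. \<alpha> i + \<beta> i"])
    fix a
    have "f a * g a = (\<Sum>\<alpha>\<in>E1. \<Sum>\<beta>\<in>E2. (c1 \<alpha> * (\<Prod>i<N. a i ^ \<alpha> i)) * (c2 \<beta> * (\<Prod>i<N. a i ^ \<beta> i)))"
      using 1 2 by (simp add: sum_product)
    also have "\<dots> = (\<Sum>(\<alpha>,\<beta>)\<in>E1\<times>E2. (c1 \<alpha> * c2 \<beta>) * (\<Prod>i<N. a i ^ (\<alpha> i + \<beta> i)))"
      by (subst sum.cartesian_product) (auto intro!: sum.cong simp: power_add prod.distrib mult_ac)
    finally show "f a * g a = (\<Sum>x\<in>E1 \<times> E2. (case x of (\<alpha>, \<beta>) \<Rightarrow> c1 \<alpha> * c2 \<beta>) *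
        (\<Prod>i<N. a i ^ (case x of (\<alpha>, \<beta>) \<Rightarrow> \<lambda>i. \<alpha> i + \<beta> i) i))"
      by (simp add: case_prod_unfold)
  qed (use 1 2 in auto)
qed

definition rational_in_coeffs :: "nat \<Rightarrow> real poly set \<Rightarrow> (real poly \<Rightarrow> real) \<Rightarrow> bool" where
  "rational_in_coeffs N S g \<longleftrightarrow> (\<exists>A B. poly_fun N A \<and> poly_fun N B \<and>
      (\<forall>P\<in>S. B (coeff P) \<noteq> 0 \<and> g P = A (coeff P) / B (coeff P)))"

lemma rational_in_coeffsI:
  assumes "poly_fun N A" "poly_fun N B"
    "\<And>P. P \<in> S \<Longrightarrow> B (coeff P) \<noteq> 0" "\<And>P. P \<in> S \<Longrightarrow> g P = A (coeff P) / B (coeff P)"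
  shows "rational_in_coeffs N S g"
  using assms unfolding rational_in_coeffs_def by blast

lemma rational_in_coeffs_const: "rational_in_coeffs N S (\<lambda>P. c)"
  by (rule rational_in_coeffsI[of N "\<lambda>a. c" "\<lambda>a. 1"]) (auto intro: poly_fun_const)

lemma rational_in_coeffs_coeff: "i < N \<Longrightarrow> rational_in_coeffs N S (\<lambda>P. coeff P i)"
  by (rule rational_in_coeffsI[of N "\<lambda>a. a i" "\<lambda>a. 1"]) (auto intro: poly_fun_const poly_fun_var)

lemma rational_in_coeffs_cong:
  "rational_in_coeffs N S f \<Longrightarrow> (\<And>P. P \<in> S \<Longrightarrow> f P = g P) \<Longrightarrow> rational_in_coeffs N S g"
  unfolding rational_in_coeffs_def by metis

lemma rational_in_coeffs_add:
  assumes "rational_in_coeffs N S f" "rational_in_coeffs N S g"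
  shows "rational_in_coeffs N S (\<lambda>P. f P + g P)"
proof -
  obtain A1 B1 where 1: "poly_fun N A1" "poly_fun N B1"
    "\<forall>P\<in>S. B1 (coeff P) \<noteq> 0 \<and> f P = A1 (coeff P) / B1 (coeff P)"
    using assms(1) unfolding rational_in_coeffs_def by blast
  obtain A2 B2 where 2: "poly_fun N A2" "poly_fun N B2"
    "\<forall>P\<in>S. B2 (coeff P) \<noteq> 0 \<and> g P = A2 (coeff P) / B2 (coeff P)"
    using assms(2) unfolding rational_in_coeffs_def by blast
  show ?thesis
    by (rule rational_in_coeffsI[of N "\<lambda>a. A1 a * B2 a + A2 a * B1 a" "\<lambda>a. B1 a * B2 a"])
      (use 1 2 in \<open>auto intro!: poly_fun_add poly_fun_mult simp: field_simps\<close>)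
qed

lemma rational_in_coeffs_mult:
  assumes "rational_in_coeffs N S f" "rational_in_coeffs N S g"
  shows "rational_in_coeffs N S (\<lambda>P. f P * g P)"
proof -
  obtain A1 B1 where 1: "poly_fun N A1" "poly_fun N B1"
    "\<forall>P\<in>S. B1 (coeff P) \<noteq> 0 \<and> f P = A1 (coeff P) / B1 (coeff P)"
    using assms(1) unfolding rational_in_coeffs_def by blast
  obtain A2 B2 where 2: "poly_fun N A2" "poly_fun N B2"
    "\<forall>P\<in>S. B2 (coeff P) \<noteq> 0 \<and> g P = A2 (coeff P) / B2 (coeff P)"
    using assms(2) unfolding rational_in_coeffs_def by blast
  show ?thesis
    by (rule rational_in_coeffsI[of N "\<lambda>a. A1 a * A2 a" "\<lambda>a. B1 a * B2 a"])
      (use 1 2 in \<open>auto intro!: poly_fun_mult\<close>)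
qed

lemma rational_in_coeffs_divide:
  assumes "rational_in_coeffs N S f" "rational_in_coeffs N S g" "\<And>P. P \<in> S \<Longrightarrow> g P \<noteq> 0"
  shows "rational_in_coeffs N S (\<lambda>P. f P / g P)"
proof -
  obtain A1 B1 where 1: "poly_fun N A1" "poly_fun N B1"
    "\<forall>P\<in>S. B1 (coeff P) \<noteq> 0 \<and> f P = A1 (coeff P) / B1 (coeff P)"
    using assms(1) unfolding rational_in_coeffs_def by blast
  obtain A2 B2 where 2: "poly_fun N A2" "poly_fun N B2"
    "\<forall>P\<in>S. B2 (coeff P) \<noteq> 0 \<and> g P = A2 (coeff P) / B2 (coeff P)"
    using assms(2) unfolding rational_in_coeffs_def by blast
  have "A2 (coeff P) \<noteq> 0" if "P \<in> S" for P
    using 2 assms(3)[OF that] that by auto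
  then show ?thesis
    by (intro rational_in_coeffsI[of N "\<lambda>a. A1 a * B2 a" "\<lambda>a. B1 a * A2 a"])
      (use 1 2 in \<open>auto intro!: poly_fun_mult\<close>)
qed

lemma rational_in_coeffs_minus: "rational_in_coeffs N S f \<Longrightarrow> rational_in_coeffs N S (\<lambda>P. - f P)"
  using rational_in_coeffs_mult[OF rational_in_coeffs_const[of N S "-1"], of f] by simp

lemma rational_in_coeffs_if:
  "rational_in_coeffs N S f \<Longrightarrow> rational_in_coeffs N S g \<Longrightarrow>
    rational_in_coeffs N S (\<lambda>P. if b then f P else g P)"
  by (cases b) simp_all

lemma rational_in_coeffs_sum:
  "finite I \<Longrightarrow> (\<And>i. i \<in> I \<Longrightarrow> rational_in_coeffs N S (f i)) \<Longrightarrow>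
    rational_in_coeffs N S (\<lambda>P. \<Sum>i\<in>I. f i P)"
  by (induction I rule: finite_induct) (auto intro: rational_in_coeffs_const rational_in_coeffs_add)

lemma rational_in_coeffs_prod:
  "finite I \<Longrightarrow> (\<And>i. i \<in> I \<Longrightarrow> rational_in_coeffs N S (f i)) \<Longrightarrow>
    rational_in_coeffs N S (\<lambda>P. \<Prod>i\<in>I. f i P)"
  by (induction I rule: finite_induct) (auto intro: rational_in_coeffs_const rational_in_coeffs_mult)

definition rational_mat :: "nat \<Rightarrow> real poly set \<Rightarrow> nat \<Rightarrow> (real poly \<Rightarrow> real mat) \<Rightarrow> bool" where
  "rational_mat N S k M \<longleftrightarrow>
     (\<forall>P\<in>S. M P \<in> carrier_mat k k) \<and> (\<forall>i<k. \<forall>j<k. rational_in_coeffs N S (\<lambda>P. M P $$ (i,j)))"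

lemma rational_mat_entry:
  "rational_mat N S k M \<Longrightarrow> i < k \<Longrightarrow> j < k \<Longrightarrow> rational_in_coeffs N S (\<lambda>P. M P $$ (i,j))"
  unfolding rational_mat_def by auto

lemma rational_mat_carrier: "rational_mat N S k M \<Longrightarrow> P \<in> S \<Longrightarrow> M P \<in> carrier_mat k k"
  unfolding rational_mat_def by auto

lemma rational_matI:
  assumes "\<And>P. P \<in> S \<Longrightarrow> M P \<in> carrier_mat k k"
    and "\<And>i j. i < k \<Longrightarrow> j < k \<Longrightarrow> rational_in_coeffs N S (\<lambda>P. M P $$ (i,j))"
  shows "rational_mat N S k M"
  unfolding rational_mat_def using assms by blast

lemma rational_mat_mat:
  assumes "\<And>i j. i < k \<Longrightarrow> j < k \<Longrightarrow> rational_in_coeffs N S (\<lambda>P. f P i j)"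
  shows "rational_mat N S k (\<lambda>P. mat k k (\<lambda>(i,j). f P i j))"
proof (rule rational_matI)
  fix i j assume "i < k" "j < k"
  then show "rational_in_coeffs N S (\<lambda>P. mat k k (\<lambda>(i,j). f P i j) $$ (i, j))"
    using assms by (auto elim: rational_in_coeffs_cong)
qed simp

lemma rational_mat_cong:
  assumes "rational_mat N S k M" "\<And>P. P \<in> S \<Longrightarrow> M P = M' P"
  shows "rational_mat N S k M'"
proof (rule rational_matI)
  fix P assume "P \<in> S"
  then show "M' P \<in> carrier_mat k k" using rational_mat_carrier[OF assms(1)] assms(2) by metis
next
  fix i j assume "i < k" "j < k"
  then show "rational_in_coeffs N S (\<lambda>P. M' P $$ (i, j))"
    by (rule rational_in_coeffs_cong[OF rational_mat_entry[OF assms(1)]]) (simp add: assms(2))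
qed

lemma rational_mat_one: "rational_mat N S k (\<lambda>P. 1\<^sub>m k)"
proof (rule rational_matI)
  fix i j assume "i < k" "j < k"
  then show "rational_in_coeffs N S (\<lambda>P. 1\<^sub>m k $$ (i, j))"
    using rational_in_coeffs_const[of N S "if i = j then 1 else 0"] by simp
qed simp

lemma rational_mat_mult:
  assumes A: "rational_mat N S k A" and B: "rational_mat N S k B"
  shows "rational_mat N S k (\<lambda>P. A P * B P)"
proof (rule rational_matI)
  fix P assume "P \<in> S"
  then show "A P * B P \<in> carrier_mat k k"
    using rational_mat_carrier[OF A] rational_mat_carrier[OF B] by (meson mult_carrier_mat)
next
  fix i j assume ij: "i < k" "j < k"
  have "rational_in_coeffs N S (\<lambda>P. \<Sum>l\<in>{0..<k}. A P $$ (i,l) * B P $$ (l,j))"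
    by (intro rational_in_coeffs_sum rational_in_coeffs_mult)
      (use ij rational_mat_entry[OF A] rational_mat_entry[OF B] in auto)
  then show "rational_in_coeffs N S (\<lambda>P. (A P * B P) $$ (i, j))"
  proof (rule rational_in_coeffs_cong)
    fix P assume P: "P \<in> S"
    show "(\<Sum>l\<in>{0..<k}. A P $$ (i,l) * B P $$ (l,j)) = (A P * B P) $$ (i, j)"
      using rational_mat_carrier[OF A P] rational_mat_carrier[OF B P] ij by (simp add: scalar_prod_def)
  qed
qed

lemma rational_mat_pow:
  assumes "rational_mat N S k A"
  shows "rational_mat N S k (\<lambda>P. A P ^\<^sub>m e)"
proof (induction e)
  case 0
  show ?case
    by (rule rational_mat_cong[OF rational_mat_one]) (use rational_mat_carrier[OF assms] in auto)
next
  case (Suc e)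
  show ?case using rational_mat_mult[OF Suc assms] by simp
qed

lemma rational_mat_delete:
  assumes A: "rational_mat N S (Suc k) A" and "i < Suc k" "j < Suc k"
  shows "rational_mat N S k (\<lambda>P. mat_delete (A P) i j)"
proof (rule rational_matI)
  fix P assume "P \<in> S"
  then show "mat_delete (A P) i j \<in> carrier_mat k k"
    using mat_delete_carrier[OF rational_mat_carrier[OF A]] by simp
next
  fix i' j' assume ij: "i' < k" "j' < k"
  have "rational_in_coeffs N S (\<lambda>P. A P $$ (if i' < i then i' else Suc i', if j' < j then j' else Suc j'))"
    by (rule rational_mat_entry[OF A]) (use ij in auto)
  then show "rational_in_coeffs N S (\<lambda>P. mat_delete (A P) i j $$ (i', j'))"
    by (rule rational_in_coeffs_cong)
      (use ij in \<open>auto dest: rational_mat_carrier[OF A] simp: mat_delete_def\<close>)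
qed

lemma rational_in_coeffs_det:
  assumes A: "rational_mat N S k A"
  shows "rational_in_coeffs N S (\<lambda>P. det (A P))"
proof -
  have "rational_in_coeffs N S (\<lambda>P. \<Sum>p\<in>{p. p permutes {0..<k}}. signof p * (\<Prod>i = 0..<k. A P $$ (i, p i)))"
  proof (intro rational_in_coeffs_sum rational_in_coeffs_mult rational_in_coeffs_const rational_in_coeffs_prod)
    fix p i assume "p \<in> {p. p permutes {0..<k}}" "i \<in> {0..<k}"
    then show "rational_in_coeffs N S (\<lambda>P. A P $$ (i, p i))"
      using rational_mat_entry[OF A] by (auto dest: permutes_in_image)
  qed (auto simp: finite_permutations)
  then show ?thesis
    by (rule rational_in_coeffs_cong) (auto dest: rational_mat_carrier[OF A] simp: det_def')
qed

lemma rational_mat_adj: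
  assumes A: "rational_mat N S k A"
  shows "rational_mat N S k (\<lambda>P. adj_mat (A P))"
proof (rule rational_matI)
  fix P assume "P \<in> S"
  then show "adj_mat (A P) \<in> carrier_mat k k"
    using rational_mat_carrier[OF A] adj_mat(1) by blast
next
  fix i j assume ij: "i < k" "j < k"
  then obtain k' where k: "k = Suc k'" by (cases k) auto
  have "rational_in_coeffs N S (\<lambda>P. (-1)^(j+i) * det (mat_delete (A P) j i))"
    using rational_mat_delete[of N S k' A j i] A ij k
    by (intro rational_in_coeffs_mult rational_in_coeffs_const rational_in_coeffs_det) auto
  then show "rational_in_coeffs N S (\<lambda>P. adj_mat (A P) $$ (i, j))"
    by (rule rational_in_coeffs_cong)
      (use ij in \<open>auto dest: rational_mat_carrier[OF A] simp: adj_mat_def cofactor_def\<close>)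
qed

lemma rational_mat_replace_col:
  assumes A: "rational_mat N S k A" and b: "\<And>i. i < k \<Longrightarrow> rational_in_coeffs N S (\<lambda>P. b P i)"
  shows "rational_mat N S k (\<lambda>P. replace_col (A P) (vec k (b P)) c)"
proof (rule rational_matI)
  fix P assume "P \<in> S"
  then show "replace_col (A P) (vec k (b P)) c \<in> carrier_mat k k"
    using rational_mat_carrier[OF A] unfolding replace_col_def carrier_mat_def by simp
next
  fix i j assume ij: "i < k" "j < k"
  have "rational_in_coeffs N S (\<lambda>P. if j = c then b P i else A P $$ (i,j))"
    using b rational_mat_entry[OF A] ij by (intro rational_in_coeffs_if) auto
  then show "rational_in_coeffs N S (\<lambda>P. replace_col (A P) (vec k (b P)) c $$ (i, j))"
    by (rule rational_in_coeffs_cong)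
      (use ij in \<open>auto dest: rational_mat_carrier[OF A] simp: replace_col_def\<close>)
qed

definition mat_trace :: "'a :: comm_ring mat \<Rightarrow> 'a" where
  "mat_trace A = (\<Sum>i<dim_row A. A $$ (i,i))"

lemma rational_in_coeffs_trace:
  assumes A: "rational_mat N S k A"
  shows "rational_in_coeffs N S (\<lambda>P. mat_trace (A P))"
proof -
  have "rational_in_coeffs N S (\<lambda>P. \<Sum>i<k. A P $$ (i,i))"
    by (intro rational_in_coeffs_sum) (use rational_mat_entry[OF A] in auto)
  then show ?thesis
    by (rule rational_in_coeffs_cong) (auto dest: rational_mat_carrier[OF A] simp: mat_trace_def)
qed

section \<open>Traces over the roots of a squarefree polynomial\<close>

lemma index_mult_mat_sum:
  "A \<in> carrier_mat n k \<Longrightarrow> B \<in> carrier_mat k n' \<Longrightarrow> i < n \<Longrightarrow> j < n' \<Longrightarrow>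
    (A * B) $$ (i,j) = (\<Sum>l<k. A $$ (i,l) * B $$ (l,j))"
  by (simp add: scalar_prod_def atLeast0LessThan)

lemma index_mult_mat_vec_sum:
  "A \<in> carrier_mat n k \<Longrightarrow> v \<in> carrier_vec k \<Longrightarrow> i < n \<Longrightarrow>
    (A *\<^sub>v v) $ i = (\<Sum>l<k. A $$ (i,l) * v $ l)"
  by (simp add: scalar_prod_def atLeast0LessThan)

lemma det_nonzero_if_trivial_kernel:
  fixes A :: "'a :: idom mat"
  assumes "A \<in> carrier_mat k k" "\<And>v. v \<in> carrier_vec k \<Longrightarrow> A *\<^sub>v v = 0\<^sub>v k \<Longrightarrow> v = 0\<^sub>v k"
  shows "det A \<noteq> 0"
  using det_0_iff_vec_prod_zero[OF assms(1)] assms(2) by blast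

lemma mat_trace_mult_comm:
  assumes "A \<in> carrier_mat k k" "B \<in> carrier_mat k k"
  shows "mat_trace (A * B) = mat_trace (B * A)"
proof -
  have "mat_trace (A * B) = (\<Sum>i<k. (A * B) $$ (i,i))"
    using assms by (simp add: mat_trace_def)
  also have "\<dots> = (\<Sum>i<k. \<Sum>l<k. A $$ (i,l) * B $$ (l,i))"
    by (rule sum.cong[OF refl], rule index_mult_mat_sum[OF assms]) auto
  also have "\<dots> = (\<Sum>l<k. \<Sum>i<k. B $$ (l,i) * A $$ (i,l))"
    by (subst sum.swap) (simp add: mult.commute)
  also have "\<dots> = (\<Sum>l<k. (B * A) $$ (l,l))"
    by (rule sum.cong[OF refl], rule index_mult_mat_sum[OF assms(2,1), symmetric]) auto
  also have "\<dots> = mat_trace (B * A)"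
    using assms by (simp add: mat_trace_def)
  finally show ?thesis .
qed

text \<open>
  A hypothesis \<open>(W * A) $$ (j,l) = c j * W $$ (j,l)\<close> says \<open>W * A = diag c * W\<close>: the rows of \<open>W\<close>
  are left eigenvectors of \<open>A\<close>.
\<close>

lemma eigenrows_mult_left:
  assumes W: "W \<in> carrier_mat k k" and A: "A \<in> carrier_mat k k" and B: "B \<in> carrier_mat k k"
    and WA: "\<And>j l. j < k \<Longrightarrow> l < k \<Longrightarrow> (W * A) $$ (j,l) = c j * W $$ (j,l)"
    and jl: "j < k" "l < k"
  shows "(W * (A * B)) $$ (j,l) = c j * (W * B) $$ (j,l)"
proof -
  have "W * (A * B) = (W * A) * B" using W A B by (simp add: assoc_mult_mat)
  then have "(W * (A * B)) $$ (j,l) = (\<Sum>i<k. (W * A) $$ (j,i) * B $$ (i,l))"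
    using index_mult_mat_sum[OF mult_carrier_mat[OF W A] B jl] by simp
  also have "\<dots> = c j * (\<Sum>i<k. W $$ (j,i) * B $$ (i,l))"
    by (simp add: WA jl sum_distrib_left mult.assoc)
  also have "\<dots> = c j * (W * B) $$ (j,l)"
    using index_mult_mat_sum[OF W B jl] by simp
  finally show ?thesis .
qed

lemma det_nonzero_if_eigenrows:
  fixes W M :: "'a :: field mat"
  assumes W: "W \<in> carrier_mat k k" "det W \<noteq> 0" and M: "M \<in> carrier_mat k k"
    and WM: "\<And>j l. j < k \<Longrightarrow> l < k \<Longrightarrow> (W * M) $$ (j,l) = c j * W $$ (j,l)"
    and c: "\<And>j. j < k \<Longrightarrow> c j \<noteq> 0"
  shows "det M \<noteq> 0"
proof (rule det_nonzero_if_trivial_kernel[OF M])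
  fix v assume v: "v \<in> carrier_vec k" "M *\<^sub>v v = 0\<^sub>v k"
  have "(W *\<^sub>v v) $ j = 0" if j: "j < k" for j
  proof -
    have "c j * (W *\<^sub>v v) $ j = (\<Sum>l<k. (W * M) $$ (j,l) * v $ l)"
      using index_mult_mat_vec_sum[OF W(1) v(1) j] by (simp add: WM j sum_distrib_left mult.assoc)
    also have "\<dots> = ((W * M) *\<^sub>v v) $ j"
      using index_mult_mat_vec_sum[OF mult_carrier_mat[OF W(1) M] v(1) j] by simp
    also have "\<dots> = (W *\<^sub>v (M *\<^sub>v v)) $ j"
      using W M v by (simp add: assoc_mult_mat_vec)
    also have "\<dots> = 0" using W v j by simp
    finally show ?thesis using c[OF j] by simp
  qed
  then have "W *\<^sub>v v = 0\<^sub>v k" using W by (intro eq_vecI) auto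
  then show "v = 0\<^sub>v k" using det_0_iff_vec_prod_zero[OF W(1)] W(2) v(1) by blast
qed

lemma mat_trace_eq_sum_eigenvalues:
  fixes W X :: "'a :: field mat"
  assumes W: "W \<in> carrier_mat k k" "det W \<noteq> 0" and X: "X \<in> carrier_mat k k"
    and WX: "\<And>j l. j < k \<Longrightarrow> l < k \<Longrightarrow> (W * X) $$ (j,l) = c j * W $$ (j,l)"
  shows "mat_trace X = (\<Sum>j<k. c j)"
proof -
  define V where "V = (1 / det W) \<cdot>\<^sub>m adj_mat W"
  have V: "V \<in> carrier_mat k k" unfolding V_def using adj_mat(1)[OF W(1)] by simp
  have "V * W = (1 / det W) \<cdot>\<^sub>m (adj_mat W * W)"
    unfolding V_def by (rule mult_smult_assoc_mat[OF adj_mat(1)[OF W(1)] W(1)])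
  then have VW: "V * W = 1\<^sub>m k" using adj_mat(3)[OF W(1)] W(2) by (auto intro!: eq_matI)
  have "W * V = (1 / det W) \<cdot>\<^sub>m (W * adj_mat W)"
    unfolding V_def by (rule mult_smult_distrib[OF W(1) adj_mat(1)[OF W(1)]])
  then have WV: "W * V = 1\<^sub>m k" using adj_mat(2)[OF W(1)] W(2) by (auto intro!: eq_matI)
  have "X = V * (W * X)" using V W X by (simp add: assoc_mult_mat[symmetric] VW)
  then have "mat_trace X = mat_trace ((W * X) * V)"
    using mat_trace_mult_comm[OF V mult_carrier_mat[OF W(1) X]] by simp
  also have "\<dots> = (\<Sum>j<k. (W * (X * V)) $$ (j,j))"
    unfolding mat_trace_def using W X V by (simp add: assoc_mult_mat)
  also have "\<dots> = (\<Sum>j<k. c j)"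
    using eigenrows_mult_left[OF W(1) X V WX] by (simp add: WV)
  finally show ?thesis .
qed

text \<open>
  For monic \<open>Q\<close> of degree \<open>m\<close>, \<open>companion_mat Q m\<close> maps the row of powers \<open>(1, y, \<dots>, y^(m-1))\<close>
  of a root \<open>y\<close> of \<open>Q\<close> to \<open>(y, \<dots>, y^m)\<close>, and \<open>eval_companion Q m h K\<close> is \<open>h\<close> evaluated at it
  whenever \<open>deg h \<le> K\<close>.
\<close>

definition companion_mat :: "real poly \<Rightarrow> nat \<Rightarrow> real mat" where
  "companion_mat Q m =
     mat m m (\<lambda>(i,l). if l + 1 < m then (if i = l + 1 then 1 else 0) else - coeff Q i)"

definition eval_companion :: "real poly \<Rightarrow> nat \<Rightarrow> real poly \<Rightarrow> nat \<Rightarrow> real mat" where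
  "eval_companion Q m h K =
     mat m m (\<lambda>(i,l). \<Sum>e\<le>K. coeff h e * (companion_mat Q m ^\<^sub>m e) $$ (i,l))"

definition vandermonde :: "(nat \<Rightarrow> real) \<Rightarrow> nat \<Rightarrow> real mat" where
  "vandermonde p m = mat m m (\<lambda>(j,l). p j ^ l)"

lemma companion_mat_carrier [simp]: "companion_mat Q m \<in> carrier_mat m m"
  by (simp add: companion_mat_def)

lemma eval_companion_carrier [simp]: "eval_companion Q m h K \<in> carrier_mat m m"
  by (simp add: eval_companion_def)

lemma vandermonde_carrier [simp]: "vandermonde p m \<in> carrier_mat m m"
  by (simp add: vandermonde_def)

lemma powers_mult_companion_mat:
  assumes Q: "coeff Q m = 1" "degree Q = m" and y: "poly Q y = 0" and l: "l < m"
  shows "(\<Sum>i<m. y ^ i * companion_mat Q m $$ (i,l)) = y ^ (l + 1)"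
proof (cases "l + 1 < m")
  case True
  have "(\<Sum>i<m. y ^ i * companion_mat Q m $$ (i,l)) = (\<Sum>i<m. if i = l + 1 then y ^ i else 0)"
    by (rule sum.cong) (use True l in \<open>auto simp: companion_mat_def\<close>)
  also have "\<dots> = y ^ (l + 1)" using True by simp
  finally show ?thesis .
next
  case False
  then have lm: "l + 1 = m" using l by simp
  have "0 = (\<Sum>i\<le>m. coeff Q i * y ^ i)" using y Q by (simp add: poly_altdef)
  then have low: "(\<Sum>i<m. coeff Q i * y ^ i) = - (y ^ m)"
    using Q by (simp add: lessThan_Suc_atMost[symmetric] eq_neg_iff_add_eq_0 add.commute)
  have "(\<Sum>i<m. y ^ i * companion_mat Q m $$ (i,l)) = - (\<Sum>i<m. coeff Q i * y ^ i)"
    by (subst sum_negf[symmetric], rule sum.cong) (use False l in \<open>auto simp: companion_mat_def\<close>)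
  then show ?thesis using lm low by simp
qed

lemma vandermonde_mult_companion_pow:
  assumes Q: "coeff Q m = 1" "degree Q = m" and roots: "\<And>j. j < m \<Longrightarrow> poly Q (p j) = 0"
    and j: "j < m" and l: "l < m"
  shows "(vandermonde p m * companion_mat Q m ^\<^sub>m e) $$ (j,l) = p j ^ (e + l)"
  using l
proof (induction e arbitrary: l)
  case 0
  have "vandermonde p m * companion_mat Q m ^\<^sub>m 0 = vandermonde p m"
    by (simp add: companion_mat_def vandermonde_def)
  then show ?case using 0 j by (simp add: vandermonde_def)
next
  case (Suc e)
  let ?V = "vandermonde p m" and ?C = "companion_mat Q m"
  have "?V * ?C ^\<^sub>m Suc e = (?V * ?C ^\<^sub>m e) * ?C"
    by (simp add: assoc_mult_mat[of _ m m _ m _ m])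
  then have "(?V * ?C ^\<^sub>m Suc e) $$ (j,l) = (\<Sum>i<m. (?V * ?C ^\<^sub>m e) $$ (j,i) * ?C $$ (i,l))"
    using index_mult_mat_sum[OF mult_carrier_mat[OF vandermonde_carrier pow_carrier_mat] _ j Suc.prems]
    by simp
  also have "\<dots> = p j ^ e * (\<Sum>i<m. p j ^ i * ?C $$ (i,l))"
    by (simp add: Suc.IH sum_distrib_left power_add mult.assoc)
  also have "(\<Sum>i<m. p j ^ i * ?C $$ (i,l)) = p j ^ (l + 1)"
    using Q roots j Suc.prems by (intro powers_mult_companion_mat) auto
  finally show ?case by (simp add: power_add)
qed

lemma poly_eq_sum_atMost:
  fixes h :: "'a :: comm_semiring_1 poly"
  assumes "degree h \<le> K"
  shows "poly h x = (\<Sum>e\<le>K. coeff h e * x ^ e)"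
proof -
  have "poly h x = (\<Sum>i\<le>degree h. coeff h i * x ^ i)" by (rule poly_altdef)
  also have "\<dots> = (\<Sum>e\<le>K. coeff h e * x ^ e)"
    by (rule sum.mono_neutral_left) (use assms in \<open>auto simp: coeff_eq_0\<close>)
  finally show ?thesis .
qed

lemma vandermonde_mult_eval_companion:
  assumes Q: "coeff Q m = 1" "degree Q = m" and roots: "\<And>j. j < m \<Longrightarrow> poly Q (p j) = 0"
    and h: "degree h \<le> K" and j: "j < m" and l: "l < m"
  shows "(vandermonde p m * eval_companion Q m h K) $$ (j,l) = poly h (p j) * vandermonde p m $$ (j,l)"
proof -
  let ?V = "vandermonde p m" and ?C = "companion_mat Q m"
  have "(?V * eval_companion Q m h K) $$ (j,l) = (\<Sum>i<m. \<Sum>e\<le>K. coeff h e * (?V $$ (j,i) * (?C ^\<^sub>m e) $$ (i,l)))"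
    using index_mult_mat_sum[OF vandermonde_carrier eval_companion_carrier j l] l
    by (simp add: eval_companion_def sum_distrib_left mult_ac)
  also have "\<dots> = (\<Sum>e\<le>K. coeff h e * (?V * ?C ^\<^sub>m e) $$ (j,l))"
    using index_mult_mat_sum[OF vandermonde_carrier pow_carrier_mat[OF companion_mat_carrier] j l]
    by (subst sum.swap) (simp add: sum_distrib_left)
  also have "\<dots> = (\<Sum>e\<le>K. coeff h e * p j ^ e) * p j ^ l"
    by (simp add: vandermonde_mult_companion_pow[OF Q roots j l] sum_distrib_right power_add mult.assoc)
  also have "\<dots> = poly h (p j) * ?V $$ (j,l)"
    using poly_eq_sum_atMost[OF h] j l by (simp add: vandermonde_def)
  finally show ?thesis .
qed

lemma det_vandermonde_nonzero:
  assumes inj: "inj_on p {..<m}"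
  shows "det (vandermonde p m) \<noteq> 0"
proof (rule det_nonzero_if_trivial_kernel[OF vandermonde_carrier])
  fix v assume v: "v \<in> carrier_vec m" and Vv: "vandermonde p m *\<^sub>v v = 0\<^sub>v m"
  define V where "V = (\<Sum>l<m. monom (v $ l) l)"
  have coeff_V: "coeff V i = (if i < m then v $ i else 0)" for i
    unfolding V_def by (simp add: coeff_sum coeff_monom sum.delta)
  have "poly V (p j) = (vandermonde p m *\<^sub>v v) $ j" if "j < m" for j
    using index_mult_mat_vec_sum[OF vandermonde_carrier v that] that
    by (simp add: V_def poly_sum poly_monom vandermonde_def mult.commute)
  then have "p ` {..<m} \<subseteq> {x. poly V x = 0}" using Vv by auto
  have "V = 0"
  proof (rule ccontr)
    assume "V \<noteq> 0"
    then have "degree V < m" using coeff_V[of "degree V"] by (auto split: if_splits)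
    moreover have "m \<le> card {x. poly V x = 0}"
      using card_mono[OF poly_roots_finite[OF \<open>V \<noteq> 0\<close>] \<open>p ` {..<m} \<subseteq> _\<close>] card_image[OF inj] by simp
    ultimately show False using card_poly_roots_bound[OF \<open>V \<noteq> 0\<close>] by simp
  qed
  then show "v = 0\<^sub>v m" using v coeff_V by (intro eq_vecI) (auto, metis)
qed

lemma mat_trace_eval_companion_quotient:
  assumes inj: "inj_on p {..<m}" and Q: "coeff Q m = 1" "degree Q = m"
    and roots: "\<And>j. j < m \<Longrightarrow> poly Q (p j) = 0"
    and f: "degree f \<le> K" and g: "degree g \<le> K" and g_nz: "\<And>j. j < m \<Longrightarrow> poly g (p j) \<noteq> 0"
  shows "det (eval_companion Q m g K) \<noteq> 0"
    and "mat_trace (eval_companion Q m f K * adj_mat (eval_companion Q m g K)) =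
      det (eval_companion Q m g K) * (\<Sum>j<m. poly f (p j) / poly g (p j))"
proof -
  let ?V = "vandermonde p m" and ?Mf = "eval_companion Q m f K" and ?Mg = "eval_companion Q m g K"
  note Vf = vandermonde_mult_eval_companion[OF Q roots f]
  note Vg = vandermonde_mult_eval_companion[OF Q roots g]
  have V: "?V \<in> carrier_mat m m" "det ?V \<noteq> 0" using det_vandermonde_nonzero[OF inj] by auto
  show det_Mg: "det ?Mg \<noteq> 0"
    by (rule det_nonzero_if_eigenrows[OF V eval_companion_carrier Vg g_nz])
  have adj: "(?V * adj_mat ?Mg) $$ (j,l) = det ?Mg / poly g (p j) * ?V $$ (j,l)"
    if "j < m" "l < m" for j l
  proof -
    have "poly g (p j) * (?V * adj_mat ?Mg) $$ (j,l) = (?V * (?Mg * adj_mat ?Mg)) $$ (j,l)"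
      using eigenrows_mult_left[OF V(1) eval_companion_carrier adj_mat(1) Vg that] by simp
    also have "\<dots> = (det ?Mg \<cdot>\<^sub>m ?V) $$ (j,l)"
      using adj_mat(2)[OF eval_companion_carrier] mult_smult_distrib[OF V(1) one_carrier_mat] V(1)
      by simp
    also have "\<dots> = det ?Mg * ?V $$ (j,l)" using that by (simp add: vandermonde_def)
    finally show ?thesis using g_nz[OF that(1)] by (simp add: field_simps)
  qed
  have "mat_trace (?Mf * adj_mat ?Mg) = (\<Sum>j<m. poly f (p j) * (det ?Mg / poly g (p j)))"
  proof (rule mat_trace_eq_sum_eigenvalues[OF V])
    fix j l assume jl: "j < m" "l < m"
    show "(?V * (?Mf * adj_mat ?Mg)) $$ (j,l) = poly f (p j) * (det ?Mg / poly g (p j)) * ?V $$ (j,l)"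
      using eigenrows_mult_left[OF V(1) eval_companion_carrier adj_mat(1) Vf jl] adj[OF jl] by simp
  qed (rule mult_carrier_mat[OF eval_companion_carrier adj_mat(1)[OF eval_companion_carrier]])
  then show "mat_trace (?Mf * adj_mat ?Mg) = det ?Mg * (\<Sum>j<m. poly f (p j) / poly g (p j))"
    by (simp add: sum_distrib_left mult.commute)
qed

section \<open>The squarefree part of a real-rooted polynomial\<close>

lemma map_poly_of_real_mult:
  "map_poly (of_real :: real \<Rightarrow> complex) (p * q) = map_poly of_real p * map_poly of_real q"
  by (rule poly_eqI) (simp add: coeff_map_poly coeff_mult of_real_sum)

lemma poly_map_poly_of_real:
  "poly (map_poly (of_real :: real \<Rightarrow> complex) p) (of_real x) = of_real (poly p x)"
  by (induction p) (auto simp: map_poly_pCons)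

lemma real_rooted_mult_right: "real_rooted (q * p) \<Longrightarrow> real_rooted p"
  unfolding real_rooted_def by (auto simp: map_poly_of_real_mult)

lemma real_rooted_without_roots_imp_degree_0:
  assumes "real_rooted p" "\<And>x. poly p x \<noteq> 0"
  shows "degree p = 0"
proof (rule ccontr)
  assume "degree p \<noteq> 0"
  then have "\<not> constant (poly (map_poly (of_real :: real \<Rightarrow> complex) p))"
    by (subst constant_degree) (simp add: degree_map_poly)
  then obtain z :: complex where z: "poly (map_poly of_real p) z = 0"
    using fundamental_theorem_of_algebra by blast
  then obtain x where "z = of_real x"
    using assms(1) unfolding real_rooted_def by (auto elim: Reals_cases)
  with z have "poly p x = 0" using poly_map_poly_of_real[of p x] by simp
  with assms(2) show False by blast
qed

lemma real_rooted_factorization: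
  "real_rooted p \<Longrightarrow> p = Polynomial.smult (lead_coeff p) (\<Prod>x\<in>root_set p. [:-x, 1:] ^ order x p)"
  unfolding root_set_def
proof (induction p rule: poly_root_order_induct)
  case (no_roots p)
  then have "degree p = 0" using real_rooted_without_roots_imp_degree_0 by blast
  then obtain c where "p = [:c:]" by (elim degree_eq_zeroE)
  then show ?case using no_roots by simp
next
  case (root p x n)
  let ?q = "[:-x, 1:] ^ n * p"
  have roots: "{z. poly ?q z = 0} = insert x {z. poly p z = 0}" using root by auto
  have order_x: "order x ?q = n"
    using root by (subst order_mult) (auto simp: order_power_n_n order_0I)
  have order_y: "order y ?q = order y p" if "poly p y = 0" for y
  proof -
    have "order y ([:-x, 1:] ^ n) = 0" using root that by (intro order_0I) auto
    then show ?thesis using root by (subst order_mult) auto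
  qed
  have "Polynomial.smult (lead_coeff ?q) (\<Prod>z\<in>{z. poly ?q z = 0}. [:-z, 1:] ^ order z ?q) =
        [:-x, 1:] ^ order x ?q *
          Polynomial.smult (lead_coeff p) (\<Prod>z\<in>{z. poly p z = 0}. [:-z, 1:] ^ order z ?q)"
    by (subst roots, subst prod.insert)
      (use root in \<open>auto intro: poly_roots_finite simp: mult_ac lead_coeff_mult lead_coeff_power\<close>)
  also have "\<dots> = [:-x, 1:] ^ n *
      Polynomial.smult (lead_coeff p) (\<Prod>z\<in>{z. poly p z = 0}. [:-z, 1:] ^ order z p)"
    by (simp add: order_x order_y)
  also have "\<dots> = ?q" using root.IH real_rooted_mult_right[OF root.prems] by simp
  finally show ?case ..
qed simp_all

definition squarefree_part :: "real poly \<Rightarrow> real poly" where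
  "squarefree_part P = (\<Prod>x\<in>root_set P. [:-x, 1:])"

definition multiple_part :: "real poly \<Rightarrow> real poly" where
  "multiple_part P = (\<Prod>x\<in>root_set P. [:-x, 1:] ^ (order x P - 1))"

definition deriv_cofactor :: "real poly \<Rightarrow> real poly" where
  "deriv_cofactor P =
     (\<Sum>x\<in>root_set P. Polynomial.smult (of_nat (order x P)) (\<Prod>y\<in>root_set P - {x}. [:-y, 1:]))"

lemma finite_root_set: "P \<noteq> 0 \<Longrightarrow> finite (root_set P)"
  unfolding root_set_def by (rule poly_roots_finite)

lemma order_pos_if_in_root_set: "P \<noteq> 0 \<Longrightarrow> x \<in> root_set P \<Longrightarrow> order x P > 0"
  unfolding root_set_def using order_root[of P x] by auto

lemma power_order_pred_mult:
  fixes q :: "'a :: monoid_mult"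
  assumes "P \<noteq> 0" "x \<in> root_set P"
  shows "q ^ (order x P - 1) * q = q ^ order x P"
proof -
  obtain k where "order x P = Suc k"
    using order_pos_if_in_root_set[OF assms] gr0_implies_Suc by blast
  then show ?thesis by (simp only: diff_Suc_1 power_Suc2)
qed

lemma multiple_part_mult_prod_remove:
  assumes "P \<noteq> 0" "x \<in> root_set P"
  shows "multiple_part P * (\<Prod>y\<in>root_set P - {x}. [:-y, 1:]) =
    [:-x, 1:] ^ (order x P - 1) * (\<Prod>y\<in>root_set P - {x}. [:-y, 1:] ^ order y P)"
proof -
  have "multiple_part P = [:-x, 1:] ^ (order x P - 1) *
      (\<Prod>y\<in>root_set P - {x}. [:-y, 1:] ^ (order y P - 1))"
    unfolding multiple_part_def using prod.remove[OF finite_root_set[OF assms(1)] assms(2)] by simp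
  moreover have "(\<Prod>y\<in>root_set P - {x}. [:-y, 1:] ^ (order y P - 1)) * (\<Prod>y\<in>root_set P - {x}. [:-y, 1:])
      = (\<Prod>y\<in>root_set P - {x}. [:-y, 1:] ^ order y P)"
    unfolding prod.distrib[symmetric] using assms(1) by (intro prod.cong refl power_order_pred_mult) auto
  ultimately show ?thesis by (simp add: mult.assoc)
qed

lemma multiple_part_mult_squarefree_part:
  "P \<noteq> 0 \<Longrightarrow> multiple_part P * squarefree_part P = (\<Prod>x\<in>root_set P. [:-x, 1:] ^ order x P)"
  unfolding multiple_part_def squarefree_part_def prod.distrib[symmetric]
  by (intro prod.cong refl power_order_pred_mult)

lemma real_rooted_eq_multiple_part_squarefree_part:
  "P \<noteq> 0 \<Longrightarrow> real_rooted P \<Longrightarrow>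
    P = Polynomial.smult (lead_coeff P) (multiple_part P * squarefree_part P)"
  using real_rooted_factorization multiple_part_mult_squarefree_part by metis

lemma pderiv_real_rooted_eq_multiple_part_deriv_cofactor:
  assumes "P \<noteq> 0" "real_rooted P"
  shows "pderiv P = Polynomial.smult (lead_coeff P) (multiple_part P * deriv_cofactor P)"
proof -
  let ?L = "\<lambda>x. [:-x, 1::real:]"
  have "pderiv (\<Prod>x\<in>root_set P. ?L x ^ order x P)
      = (\<Sum>x\<in>root_set P. (\<Prod>y\<in>root_set P - {x}. ?L y ^ order y P) * pderiv (?L x ^ order x P))"
    by (rule pderiv_prod)
  also have "\<dots> = (\<Sum>x\<in>root_set P. Polynomial.smult (of_nat (order x P))
      (multiple_part P * (\<Prod>y\<in>root_set P - {x}. ?L y)))"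
    using assms(1)
    by (intro sum.cong refl) (simp add: multiple_part_mult_prod_remove pderiv_power pderiv_pCons mult.commute)
  also have "\<dots> = multiple_part P * deriv_cofactor P"
    unfolding deriv_cofactor_def by (simp add: sum_distrib_left mult_smult_right)
  finally show ?thesis
    by (subst real_rooted_factorization[OF assms(2)]) (simp add: pderiv_smult)
qed

lemma sum_order_root_set:
  assumes "P \<noteq> 0" "real_rooted P"
  shows "(\<Sum>x\<in>root_set P. order x P) = degree P"
proof -
  have "degree P = degree (\<Prod>x\<in>root_set P. [:-x, 1::real:] ^ order x P)"
    by (subst real_rooted_factorization[OF assms(2)]) (use assms(1) in simp)
  also have "\<dots> = (\<Sum>x\<in>root_set P. order x P)"
    by (simp add: degree_prod_sum_eq degree_power_eq)
  finally show ?thesis by simp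
qed

lemma card_root_set_le_degree: "P \<noteq> 0 \<Longrightarrow> real_rooted P \<Longrightarrow> card (root_set P) \<le> degree P"
  using sum_mono[of "root_set P" "\<lambda>_. 1" "\<lambda>x. order x P"] order_pos_if_in_root_set[of P]
  by (simp add: sum_order_root_set Suc_le_eq)

lemma multiple_part_nonzero: "multiple_part P \<noteq> 0"
  unfolding multiple_part_def by (cases "finite (root_set P)") auto

lemma degree_multiple_part:
  assumes "P \<noteq> 0" "real_rooted P"
  shows "degree (multiple_part P) = degree P - card (root_set P)"
proof -
  have "degree (multiple_part P) = (\<Sum>x\<in>root_set P. order x P - 1)"
    unfolding multiple_part_def by (subst degree_prod_sum_eq) (auto simp: degree_power_eq)
  also have "\<dots> = (\<Sum>x\<in>root_set P. order x P) - (\<Sum>x\<in>root_set P. 1)"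
    by (rule sum_subtractf_nat) (use order_pos_if_in_root_set[OF assms(1)] in \<open>auto simp: Suc_le_eq\<close>)
  finally show ?thesis by (simp add: sum_order_root_set[OF assms])
qed

lemma degree_squarefree_part: "degree (squarefree_part P) = card (root_set P)"
  unfolding squarefree_part_def by (simp add: degree_prod_sum_eq)

lemma lead_coeff_squarefree_part: "lead_coeff (squarefree_part P) = 1"
  unfolding squarefree_part_def by (simp add: lead_coeff_prod)

lemma poly_squarefree_part_root: "P \<noteq> 0 \<Longrightarrow> x \<in> root_set P \<Longrightarrow> poly (squarefree_part P) x = 0"
  unfolding squarefree_part_def using finite_root_set by (auto simp: poly_prod)

lemma degree_deriv_cofactor:
  assumes "P \<noteq> 0"
  shows "degree (deriv_cofactor P) \<le> card (root_set P) - 1"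
  unfolding deriv_cofactor_def
proof (rule degree_sum_le)
  show "finite (root_set P)" by (rule finite_root_set[OF assms])
  fix x assume x: "x \<in> root_set P"
  have "degree (\<Prod>y\<in>root_set P - {x}. [:-y, 1::real:]) = card (root_set P) - 1"
    using x finite_root_set[OF assms] by (simp add: degree_prod_sum_eq)
  then show "degree (Polynomial.smult (of_nat (order x P)) (\<Prod>y\<in>root_set P - {x}. [:-y, 1::real:]))
      \<le> card (root_set P) - 1"
    by (metis degree_smult_le)
qed

lemma coeff_deriv_cofactor_eq_0:
  assumes "P \<noteq> 0" "card (root_set P) \<le> c"
  shows "coeff (deriv_cofactor P) c = 0"
proof (cases "root_set P = {}")
  case True
  then show ?thesis by (simp add: deriv_cofactor_def)
next
  case False
  then have "0 < card (root_set P)" using finite_root_set[OF assms(1)] by (simp add: card_gt_0_iff)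
  then have "degree (deriv_cofactor P) < c" using degree_deriv_cofactor[OF assms(1)] assms(2) by linarith
  then show ?thesis by (rule coeff_eq_0)
qed

lemma poly_deriv_cofactor_root:
  assumes "P \<noteq> 0" "x \<in> root_set P"
  shows "poly (deriv_cofactor P) x = of_nat (order x P) * (\<Prod>y\<in>root_set P - {x}. (x - y))"
proof -
  have fin: "finite (root_set P)" by (rule finite_root_set[OF assms(1)])
  have vanish: "(\<Prod>y\<in>root_set P - {z}. (x - y)) = 0" if "z \<in> root_set P - {x}" for z
    by (rule prod_zero) (use fin that assms(2) in auto)
  have "poly (deriv_cofactor P) x = (\<Sum>z\<in>root_set P. of_nat (order z P) * (\<Prod>y\<in>root_set P - {z}. (x - y)))"
    unfolding deriv_cofactor_def by (simp add: poly_sum poly_prod)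
  also have "\<dots> = of_nat (order x P) * (\<Prod>y\<in>root_set P - {x}. (x - y))"
    using vanish by (subst sum.remove[OF fin assms(2)]) simp
  finally show ?thesis .
qed

lemma poly_deriv_cofactor_root_nonzero:
  assumes "P \<noteq> 0" "x \<in> root_set P"
  shows "poly (deriv_cofactor P) x \<noteq> 0"
  using poly_deriv_cofactor_root[OF assms] order_pos_if_in_root_set[OF assms] finite_root_set[OF assms(1)]
  by (simp add: prod_zero_iff)

lemma pderiv_sum: "pderiv (\<Sum>x\<in>A. f x) = (\<Sum>x\<in>A. pderiv (f x))"
  by (induction A rule: infinite_finite_induct) (auto simp: pderiv_add)

lemma poly_pderiv2_squarefree_part_root:
  assumes "P \<noteq> 0" "x \<in> root_set P"
  shows "poly (pderiv (pderiv (squarefree_part P))) x =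
    2 * (\<Sum>k\<in>root_set P - {x}. \<Prod>y\<in>root_set P - {x} - {k}. (x - y))"
proof -
  let ?R = "root_set P"
  have fin: "finite ?R" by (rule finite_root_set[OF assms(1)])
  define F where "F a b = (\<Prod>y\<in>?R - {a} - {b}. (x - y))" for a b
  have F_comm: "F a b = F b a" for a b
    unfolding F_def by (simp add: Diff_insert2[symmetric] insert_commute)
  have "pderiv (squarefree_part P) = (\<Sum>a\<in>?R. \<Prod>y\<in>?R - {a}. [:-y, 1:])"
    unfolding squarefree_part_def by (simp add: pderiv_prod pderiv_pCons)
  then have "poly (pderiv (pderiv (squarefree_part P))) x = (\<Sum>a\<in>?R. \<Sum>b\<in>?R - {a}. F a b)"
    by (simp add: pderiv_sum pderiv_prod pderiv_pCons poly_sum poly_prod F_def)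
  also have "\<dots> = (\<Sum>b\<in>?R - {x}. F x b) + (\<Sum>a\<in>?R - {x}. \<Sum>b\<in>?R - {a}. F a b)"
    by (rule sum.remove[OF fin assms(2)])
  also have "(\<Sum>a\<in>?R - {x}. \<Sum>b\<in>?R - {a}. F a b) = (\<Sum>a\<in>?R - {x}. F x a)"
  proof (rule sum.cong[OF refl])
    fix a assume a: "a \<in> ?R - {x}"
    have "F a b = 0" if "b \<in> ?R - {a} - {x}" for b
      unfolding F_def by (rule prod_zero) (use fin that assms(2) a in auto)
    then have "(\<Sum>b\<in>?R - {a}. F a b) = F a x"
      using a assms(2) by (subst sum.remove[of _ x]) (auto simp: fin)
    then show "(\<Sum>b\<in>?R - {a}. F a b) = F x a" by (simp add: F_comm)
  qed
  finally show ?thesis unfolding F_def by simp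
qed

lemma sum_ordered_pairs_eq_sum_off_diagonal:
  fixes A :: "real set" and r :: "real \<Rightarrow> real"
  assumes fin: "finite A"
  shows "(\<Sum>p\<in>A. \<Sum>q\<in>A. if p < q then (1 / r q - 1 / r p) / (q - p) else 0)
       = (\<Sum>a\<in>A. \<Sum>b\<in>A - {a}. 1 / (r a * (a - b)))"
proof -
  define h where "h a b = 1 / (r a * (a - b))" for a b
  have split: "(1 / r q - 1 / r p) / (q - p) = h q p + h p q" if "p < q" for p q
  proof -
    have "r p * (p - q) = - (r p * (q - p))" by (simp add: algebra_simps)
    then show ?thesis unfolding h_def by (simp add: diff_divide_distrib)
  qed
  have "(\<Sum>p\<in>A. \<Sum>q\<in>A. if p < q then (1 / r q - 1 / r p) / (q - p) else 0)
      = (\<Sum>p\<in>A. \<Sum>q\<in>A. if p < q then h q p else 0) + (\<Sum>p\<in>A. \<Sum>q\<in>A. if p < q then h p q else 0)"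
    by (simp add: split sum.distrib[symmetric] if_distrib cong: if_cong)
  also have "(\<Sum>p\<in>A. \<Sum>q\<in>A. if p < q then h q p else 0) = (\<Sum>a\<in>A. \<Sum>b\<in>A. if b < a then h a b else 0)"
    by (rule sum.swap)
  also have "\<dots> + (\<Sum>p\<in>A. \<Sum>q\<in>A. if p < q then h p q else 0) = (\<Sum>a\<in>A. \<Sum>b\<in>A. if b \<noteq> a then h a b else 0)"
    by (simp add: sum.distrib[symmetric]) (intro sum.cong refl, auto)
  also have "\<dots> = (\<Sum>a\<in>A. \<Sum>b\<in>A - {a}. h a b)"
    using fin by (intro sum.cong[OF refl]) (simp add: sum.inter_filter[symmetric] set_diff_eq)
  finally show ?thesis unfolding h_def .
qed

text \<open>
  Partial fractions: \<open>\<Sum>\<^bsub>b\<noteq>a\<^esub> 1/(a - b) = Q''(a) / (2 Q'(a))\<close> at each root \<open>a\<close> of \<open>Q\<close>, and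
  \<open>T(a) = r\<^sub>a Q'(a)\<close>.
\<close>

lemma Zsum_eq_sum_roots:
  assumes "P \<noteq> 0"
  shows "Zsum P = (\<Sum>x\<in>root_set P.
    poly (pderiv (pderiv (squarefree_part P))) x / poly (Polynomial.smult 2 (deriv_cofactor P)) x)"
proof -
  let ?R = "root_set P"
  have fin: "finite ?R" by (rule finite_root_set[OF assms])
  have "Zsum P = (\<Sum>a\<in>?R. \<Sum>b\<in>?R - {a}. 1 / (real (order a P) * (a - b)))"
    unfolding Zsum_def by (rule sum_ordered_pairs_eq_sum_off_diagonal[OF fin])
  also have "\<dots> = (\<Sum>x\<in>?R. poly (pderiv (pderiv (squarefree_part P))) x /
      poly (Polynomial.smult 2 (deriv_cofactor P)) x)"
  proof (rule sum.cong[OF refl])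
    fix x assume x: "x \<in> ?R"
    define F where "F k = (\<Prod>y\<in>?R - {x} - {k}. (x - y))" for k
    define D where "D = (\<Prod>y\<in>?R - {x}. (x - y))"
    have r: "real (order x P) \<noteq> 0" using order_pos_if_in_root_set[OF assms x] by simp
    have D_F: "D = (x - k) * F k" if "k \<in> ?R - {x}" for k
      unfolding D_def F_def by (rule prod.remove[OF finite_Diff[OF fin] that])
    have D0: "D \<noteq> 0" unfolding D_def using fin by (simp add: prod_zero_iff)
    have frac: "F k / (real (order x P) * D) = 1 / (real (order x P) * (x - k))"
      if "k \<in> ?R - {x}" for k
    proof -
      have "F k \<noteq> 0" "x - k \<noteq> 0" using D_F[OF that] D0 by auto
      then show ?thesis unfolding D_F[OF that] using r by (simp add: field_simps)
    qed
    have "poly (pderiv (pderiv (squarefree_part P))) x / poly (Polynomial.smult 2 (deriv_cofactor P)) x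
        = (\<Sum>k\<in>?R - {x}. F k) / (real (order x P) * D)"
      using poly_pderiv2_squarefree_part_root[OF assms x] poly_deriv_cofactor_root[OF assms x]
      unfolding F_def D_def by simp
    also have "\<dots> = (\<Sum>k\<in>?R - {x}. 1 / (real (order x P) * (x - k)))"
      by (simp add: sum_divide_distrib frac)
    finally show "(\<Sum>b\<in>?R - {x}. 1 / (real (order x P) * (x - b))) =
        poly (pderiv (pderiv (squarefree_part P))) x / poly (Polynomial.smult 2 (deriv_cofactor P)) x"
      by simp
  qed
  finally show ?thesis .
qed

section \<open>The squarefree part as the solution of a linear system\<close>

lemma poly_eq_0_if_card_roots_gt_degree:
  fixes L :: "'a :: idom poly"
  assumes "degree L < card A" "finite A" "\<And>x. x \<in> A \<Longrightarrow> poly L x = 0"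
  shows "L = 0"
proof (rule ccontr)
  assume L: "L \<noteq> 0"
  have "card A \<le> card {x. poly L x = 0}"
    using assms(3) by (intro card_mono[OF poly_roots_finite[OF L]]) auto
  also have "\<dots> \<le> degree L" by (rule card_poly_roots_bound[OF L])
  finally show False using assms(1) by simp
qed

lemma cofactor_combination_eq:
  assumes "P \<noteq> 0" "real_rooted P"
  shows "T * P - L * pderiv P = Polynomial.smult (lead_coeff P)
    (multiple_part P * (T * squarefree_part P - L * deriv_cofactor P))"
proof -
  have "T * P - L * pderiv P = T * Polynomial.smult (lead_coeff P) (multiple_part P * squarefree_part P)
      - L * Polynomial.smult (lead_coeff P) (multiple_part P * deriv_cofactor P)"
    using real_rooted_eq_multiple_part_squarefree_part[OF assms]
      pderiv_real_rooted_eq_multiple_part_deriv_cofactor[OF assms] by metis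
  then show ?thesis by (simp add: algebra_simps mult_smult_right smult_diff_right)
qed

text \<open>
  As \<open>deg (multiple_part P) = deg P - m\<close>, the vanishing of the coefficients from index \<open>deg P - m\<close>
  on forces \<open>T Q = L \<cdot> deriv_cofactor P\<close>; at the \<open>m\<close> roots of \<open>Q\<close> this makes \<open>L\<close> vanish.
\<close>

lemma cofactor_equation_unique:
  assumes P: "P \<noteq> 0" "real_rooted P" and m: "card (root_set P) = m"
    and L: "degree L < m" and T: "degree T < m"
    and high: "\<And>t. degree P - m \<le> t \<Longrightarrow> coeff (T * P - L * pderiv P) t = 0"
  shows "L = 0 \<and> T = 0"
proof -
  let ?G = "multiple_part P" and ?Q = "squarefree_part P" and ?T = "deriv_cofactor P"
  define W where "W = T * ?Q - L * ?T"
  have HW: "T * P - L * pderiv P = Polynomial.smult (lead_coeff P) (?G * W)"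
    unfolding W_def by (rule cofactor_combination_eq[OF P])
  have "W = 0"
  proof (rule ccontr)
    assume "W \<noteq> 0"
    then have "T * P - L * pderiv P \<noteq> 0" and
      "degree (T * P - L * pderiv P) = degree P - m + degree W"
      using P multiple_part_nonzero[of P] degree_multiple_part[OF P] m
      by (auto simp: HW degree_mult_eq)
    with high show False by (metis le_add1 leading_coeff_0_iff)
  qed
  have "poly L x = 0" if x: "x \<in> root_set P" for x
  proof -
    have "L * ?T = T * ?Q" using \<open>W = 0\<close> unfolding W_def by simp
    then have "poly L x * poly ?T x = 0"
      using poly_squarefree_part_root[OF P(1) x] by (metis mult_zero_right poly_mult)
    then show ?thesis using poly_deriv_cofactor_root_nonzero[OF P(1) x] by simp
  qed
  then have "L = 0"
    using L m finite_root_set[OF P(1)] by (intro poly_eq_0_if_card_roots_gt_degree) auto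
  moreover have "?Q \<noteq> 0" using lead_coeff_squarefree_part[of P] by auto
  ultimately show ?thesis using \<open>W = 0\<close> unfolding W_def by simp
qed

text \<open>
  The unknowns are \<open>v = (l\<^sub>0, \<dots>, l\<^sub>m\<^sub>-\<^sub>1, t\<^sub>0, \<dots>, t\<^sub>m\<^sub>-\<^sub>1)\<close>, standing for \<open>L = \<Sum> l\<^sub>c X^c\<close> and
  \<open>T = \<Sum> t\<^sub>c X^c\<close>; row \<open>r\<close> is the coefficient of \<open>X^(d + r)\<close> in \<open>T P - L P'\<close>. With
  \<open>L = Q - X^m\<close> the equation \<open>T P = Q P'\<close> becomes \<open>T P - L P' = X^m P'\<close>, whence the right-hand side.
\<close>

definition cofactor_system_mat :: "real poly \<Rightarrow> nat \<Rightarrow> nat \<Rightarrow> real mat" where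
  "cofactor_system_mat P m d = mat (2*m) (2*m) (\<lambda>(r,c).
     if c < m then (if c \<le> d + r then - coeff (pderiv P) (d + r - c) else 0)
     else (if c - m \<le> d + r then coeff P (d + r - (c - m)) else 0))"

definition cofactor_system_rhs :: "real poly \<Rightarrow> nat \<Rightarrow> nat \<Rightarrow> nat \<Rightarrow> real" where
  "cofactor_system_rhs P m d r = (if m \<le> d + r then coeff (pderiv P) (d + r - m) else 0)"

definition low_poly :: "nat \<Rightarrow> real vec \<Rightarrow> real poly" where
  "low_poly m v = (\<Sum>c<m. monom (v $ c) c)"

definition high_poly :: "nat \<Rightarrow> real vec \<Rightarrow> real poly" where
  "high_poly m v = (\<Sum>c<m. monom (v $ (m + c)) c)"

lemma coeff_low_poly: "coeff (low_poly m v) i = (if i < m then v $ i else 0)"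
  unfolding low_poly_def by (simp add: coeff_sum sum.delta)

lemma coeff_high_poly: "coeff (high_poly m v) i = (if i < m then v $ (m + i) else 0)"
  unfolding high_poly_def by (simp add: coeff_sum sum.delta)

lemma cofactor_system_mat_carrier [simp]: "cofactor_system_mat P m d \<in> carrier_mat (2*m) (2*m)"
  by (simp add: cofactor_system_mat_def)

lemma sum_lessThan_double:
  "(\<Sum>i<2*m. f i) = (\<Sum>i<m. f i) + (\<Sum>i<m. f (m + i :: nat))"
proof -
  have "(\<Sum>i<2*m. f i) = sum f {0..<m} + sum f {m..<2*m}"
    using sum.atLeastLessThan_concat[of 0 m "2*m" f] by (simp add: atLeast0LessThan)
  also have "sum f {m..<2*m} = (\<Sum>i<m. f (m + i))"
    using sum.shift_bounds_nat_ivl[of f 0 m m] by (simp add: atLeast0LessThan mult_2 add.commute)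
  finally show ?thesis by (simp add: atLeast0LessThan)
qed

lemma coeff_sum_monom_mult:
  "coeff ((\<Sum>c<m. monom (a c) c) * p) t = (\<Sum>c<m. if c \<le> t then a c * coeff p (t - c) else 0)"
  by (auto simp: sum_distrib_right coeff_sum coeff_monom_mult intro!: sum.cong)

lemma cofactor_system_mat_mult_vec:
  assumes v: "v \<in> carrier_vec (2*m)" and r: "r < 2*m"
  shows "(cofactor_system_mat P m d *\<^sub>v v) $ r =
    coeff (high_poly m v * P - low_poly m v * pderiv P) (d + r)"
proof -
  let ?A = "cofactor_system_mat P m d"
  have "(?A *\<^sub>v v) $ r = (\<Sum>c<m. ?A $$ (r,c) * v $ c) + (\<Sum>c<m. ?A $$ (r,m+c) * v $ (m+c))"
    using index_mult_mat_vec_sum[OF cofactor_system_mat_carrier v r] by (simp add: sum_lessThan_double)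
  also have "(\<Sum>c<m. ?A $$ (r,c) * v $ c) =
      - (\<Sum>c<m. if c \<le> d + r then v $ c * coeff (pderiv P) (d + r - c) else 0)"
    unfolding sum_negf[symmetric] by (rule sum.cong) (use r in \<open>auto simp: cofactor_system_mat_def\<close>)
  also have "(\<Sum>c<m. ?A $$ (r,m+c) * v $ (m+c)) =
      (\<Sum>c<m. if c \<le> d + r then v $ (m+c) * coeff P (d + r - c) else 0)"
    by (rule sum.cong) (use r in \<open>auto simp: cofactor_system_mat_def\<close>)
  finally show ?thesis
    unfolding low_poly_def high_poly_def coeff_diff coeff_sum_monom_mult by simp
qed

lemma det_cofactor_system_nonzero:
  assumes P: "P \<noteq> 0" "real_rooted P" and m: "card (root_set P) = m" "0 < m"
  shows "det (cofactor_system_mat P m (degree P - m)) \<noteq> 0"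
proof (rule det_nonzero_if_trivial_kernel[OF cofactor_system_mat_carrier])
  fix v assume v: "v \<in> carrier_vec (2*m)" and Av: "cofactor_system_mat P m (degree P - m) *\<^sub>v v = 0\<^sub>v (2*m)"
  let ?L = "low_poly m v" and ?T = "high_poly m v"
  have "m \<le> degree P" using card_root_set_le_degree[OF P] m by simp
  have "degree ?L < m" "degree ?T < m"
    using m(2) by (auto intro!: degree_lessI simp: coeff_low_poly coeff_high_poly)
  moreover have "coeff (?T * P - ?L * pderiv P) t = 0" if t: "degree P - m \<le> t" for t
  proof (cases "t < degree P + m")
    case True
    then have "t - (degree P - m) < 2*m" using t \<open>m \<le> degree P\<close> by simp
    from cofactor_system_mat_mult_vec[OF v this, of P "degree P - m"] this show ?thesis
      using Av t by simp
  next
    case False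
    have "degree (?T * P - ?L * pderiv P) < t"
      using \<open>degree ?L < m\<close> \<open>degree ?T < m\<close> False
        degree_mult_le[of ?T P] degree_mult_le[of ?L "pderiv P"] degree_pderiv[of P]
        degree_diff_le_max[of "?T * P" "?L * pderiv P"]
      by linarith
    then show ?thesis by (rule coeff_eq_0)
  qed
  ultimately have "?L = 0 \<and> ?T = 0" by (rule cofactor_equation_unique[OF P m(1)])
  then show "v = 0\<^sub>v (2*m)"
    using v coeff_low_poly[of m v] coeff_high_poly[of m v]
    by (intro eq_vecI) (auto, metis add_diff_inverse_nat nat_add_left_cancel_less mult_2)
qed

lemma cofactor_system_solution:
  assumes P: "P \<noteq> 0" "real_rooted P" and m: "card (root_set P) = m"
  defines "x \<equiv> vec (2*m) (\<lambda>c. if c < m then coeff (squarefree_part P) c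
                                 else coeff (deriv_cofactor P) (c - m))"
  shows "cofactor_system_mat P m (degree P - m) *\<^sub>v x = vec (2*m) (cofactor_system_rhs P m (degree P - m))"
proof (rule eq_vecI)
  let ?Q = "squarefree_part P" and ?T = "deriv_cofactor P" and ?d = "degree P - m"
  have L: "low_poly m x = ?Q - monom 1 m"
    using degree_squarefree_part[of P] lead_coeff_squarefree_part[of P] m
    by (intro poly_eqI) (auto simp: coeff_low_poly x_def coeff_eq_0)
  have T: "high_poly m x = ?T"
    using coeff_deriv_cofactor_eq_0[OF P(1)] m by (intro poly_eqI) (simp add: coeff_high_poly x_def)
  have "?T * P - ?Q * pderiv P = 0"
    using cofactor_combination_eq[OF P, of ?T ?Q] by (simp add: mult.commute)
  then have "high_poly m x * P - low_poly m x * pderiv P = monom 1 m * pderiv P"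
    unfolding L T by (simp add: algebra_simps)
  moreover fix r assume "r < dim_vec (vec (2*m) (cofactor_system_rhs P m ?d))"
  ultimately show "(cofactor_system_mat P m ?d *\<^sub>v x) $ r = vec (2*m) (cofactor_system_rhs P m ?d) $ r"
    using cofactor_system_mat_mult_vec[of x m r P ?d]
    by (simp add: x_def cofactor_system_rhs_def coeff_monom_mult)
qed (simp add: cofactor_system_mat_def)

lemma coeffs_cofactor_cramer:
  assumes P: "P \<noteq> 0" "real_rooted P" and m: "card (root_set P) = m" and c: "c < 2*m"
  defines "A \<equiv> cofactor_system_mat P m (degree P - m)"
    and "b \<equiv> vec (2*m) (cofactor_system_rhs P m (degree P - m))"
  shows "(if c < m then coeff (squarefree_part P) c else coeff (deriv_cofactor P) (c - m))
    = det (replace_col A b c) / det A"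
proof -
  let ?x = "vec (2*m) (\<lambda>c. if c < m then coeff (squarefree_part P) c
                            else coeff (deriv_cofactor P) (c - m))"
  have m_pos: "0 < m" using c by simp
  have "det (replace_col A b c) = ?x $ c * det A"
    using cramer_lemma_mat[of A "2*m" ?x c] cofactor_system_solution[OF P m] c
    unfolding A_def b_def by simp
  then show ?thesis
    using det_cofactor_system_nonzero[OF P m m_pos] c unfolding A_def by simp
qed

definition polys_with_pattern :: "nat \<Rightarrow> nat multiset \<Rightarrow> real poly set" where
  "polys_with_pattern n R = {P. P \<noteq> 0 \<and> degree P = n \<and> real_rooted P \<and> mult_pattern P = R}"

lemma polys_with_patternD:
  assumes "P \<in> polys_with_pattern n R"
  shows "P \<noteq> 0" "degree P = n" "real_rooted P" "card (root_set P) = size R"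
  using assms unfolding polys_with_pattern_def mult_pattern_def by auto

lemma rational_in_coeffs_coeff_pattern:
  "rational_in_coeffs (Suc n) (polys_with_pattern n R) (\<lambda>P. coeff P i)"
proof (cases "i < Suc n")
  case True
  then show ?thesis by (rule rational_in_coeffs_coeff)
next
  case False
  show ?thesis
  proof (rule rational_in_coeffs_cong[OF rational_in_coeffs_const[of _ _ 0]])
    fix P assume "P \<in> polys_with_pattern n R"
    then show "0 = coeff P i" using False polys_with_patternD(2)[of P] by (simp add: coeff_eq_0)
  qed
qed

lemma rational_in_coeffs_coeff_pderiv_pattern:
  "rational_in_coeffs (Suc n) (polys_with_pattern n R) (\<lambda>P. coeff (pderiv P) i)"
  by (rule rational_in_coeffs_cong[OF rational_in_coeffs_mult[OF rational_in_coeffs_const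
        rational_in_coeffs_coeff_pattern]]) (simp add: coeff_pderiv)

lemma rational_in_coeffs_cofactor_unknown:
  assumes c: "c < 2 * size R"
  shows "rational_in_coeffs (Suc n) (polys_with_pattern n R) (\<lambda>P.
    if c < size R then coeff (squarefree_part P) c else coeff (deriv_cofactor P) (c - size R))"
proof -
  let ?m = "size R" and ?S = "polys_with_pattern n R"
  let ?A = "\<lambda>P. cofactor_system_mat P ?m (n - ?m)"
  let ?b = "\<lambda>P. cofactor_system_rhs P ?m (n - ?m)"
  have A: "rational_mat (Suc n) ?S (2 * ?m) ?A"
    unfolding cofactor_system_mat_def
    by (intro rational_mat_mat rational_in_coeffs_if rational_in_coeffs_minus rational_in_coeffs_const
        rational_in_coeffs_coeff_pattern rational_in_coeffs_coeff_pderiv_pattern)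
  have b: "rational_in_coeffs (Suc n) ?S (\<lambda>P. ?b P r)" for r
    unfolding cofactor_system_rhs_def
    by (intro rational_in_coeffs_if rational_in_coeffs_const rational_in_coeffs_coeff_pderiv_pattern)
  have det: "det (?A P) \<noteq> 0"
    and cramer: "(if c < ?m then coeff (squarefree_part P) c else coeff (deriv_cofactor P) (c - ?m))
      = det (replace_col (?A P) (vec (2 * ?m) (?b P)) c) / det (?A P)" if "P \<in> ?S" for P
    using det_cofactor_system_nonzero[OF polys_with_patternD(1,3,4)[OF that]] c
      coeffs_cofactor_cramer[OF polys_with_patternD(1,3,4)[OF that] c] polys_with_patternD(2)[OF that]
    by simp_all
  have "rational_in_coeffs (Suc n) ?S (\<lambda>P. det (replace_col (?A P) (vec (2 * ?m) (?b P)) c) / det (?A P))"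
    by (intro rational_in_coeffs_divide rational_in_coeffs_det[OF rational_mat_replace_col[OF A b]]
        rational_in_coeffs_det[OF A] det)
  then show ?thesis
    by (rule rational_in_coeffs_cong) (simp add: cramer)
qed

lemma rational_in_coeffs_coeff_squarefree_part:
  shows "rational_in_coeffs (Suc n) (polys_with_pattern n R) (\<lambda>P. coeff (squarefree_part P) c)"
proof (cases "c < size R")
  case True
  then show ?thesis
    using rational_in_coeffs_cofactor_unknown[where c = c and R = R and n = n] by simp
next
  case False
  show ?thesis
  proof (rule rational_in_coeffs_cong[OF rational_in_coeffs_const[of _ _ "if c = size R then 1 else 0"]])
    fix P assume "P \<in> polys_with_pattern n R"
    then have "degree (squarefree_part P) = size R" "lead_coeff (squarefree_part P) = 1"
      using degree_squarefree_part lead_coeff_squarefree_part polys_with_patternD(4) by metis+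
    then show "(if c = size R then 1 else 0) = coeff (squarefree_part P) c"
      using False by (auto simp: coeff_eq_0)
  qed
qed

lemma rational_in_coeffs_coeff_deriv_cofactor:
  shows "rational_in_coeffs (Suc n) (polys_with_pattern n R) (\<lambda>P. coeff (deriv_cofactor P) c)"
proof (cases "c < size R")
  case True
  then show ?thesis
    using rational_in_coeffs_cofactor_unknown[where c = "size R + c" and R = R and n = n] by simp
next
  case False
  show ?thesis
  proof (rule rational_in_coeffs_cong[OF rational_in_coeffs_const[of _ _ 0]])
    fix P assume "P \<in> polys_with_pattern n R"
    then show "0 = coeff (deriv_cofactor P) c"
      using coeff_deriv_cofactor_eq_0[of P c] polys_with_patternD[of P n R] False by simp
  qed
qed

lemma rational_mat_eval_companion:
  assumes "\<And>c. rational_in_coeffs N S (\<lambda>P. coeff (Q P) c)"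
    and "\<And>c. rational_in_coeffs N S (\<lambda>P. coeff (h P) c)"
  shows "rational_mat N S m (\<lambda>P. eval_companion (Q P) m (h P) K)"
proof -
  have C: "rational_mat N S m (\<lambda>P. companion_mat (Q P) m)"
    unfolding companion_mat_def
    by (intro rational_mat_mat rational_in_coeffs_if rational_in_coeffs_minus rational_in_coeffs_const assms(1))
  show ?thesis
    unfolding eval_companion_def
    by (intro rational_mat_mat rational_in_coeffs_sum rational_in_coeffs_mult assms(2)
        rational_mat_entry[OF rational_mat_pow[OF C]]) simp_all
qed

lemma Zsum_eq_trace_eval_companion:
  assumes P: "P \<noteq> 0"
  defines "m \<equiv> card (root_set P)" and "Q \<equiv> squarefree_part P"
  defines "Mf \<equiv> eval_companion Q m (pderiv (pderiv Q)) m"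
    and "Mg \<equiv> eval_companion Q m (Polynomial.smult 2 (deriv_cofactor P)) m"
  shows "det Mg \<noteq> 0" "Zsum P = mat_trace (Mf * adj_mat Mg) / det Mg"
proof -
  let ?f = "pderiv (pderiv Q)" and ?g = "Polynomial.smult 2 (deriv_cofactor P)"
  obtain p where p: "bij_betw p {..<m} (root_set P)"
    using finite_root_set[OF P] ex_bij_betw_nat_finite lessThan_atLeast0 unfolding m_def by metis
  then have roots: "poly Q (p j) = 0" "poly ?g (p j) \<noteq> 0" if "j < m" for j
    using that poly_squarefree_part_root[OF P] poly_deriv_cofactor_root_nonzero[OF P]
    unfolding Q_def by (auto dest: bij_betwE)
  have Q: "degree Q = m" "coeff Q m = 1"
    using degree_squarefree_part[of P] lead_coeff_squarefree_part[of P] unfolding Q_def m_def by auto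
  have "degree ?f \<le> m" "degree ?g \<le> m"
    using degree_deriv_cofactor[OF P] by (auto simp: degree_pderiv Q m_def)
  note trace = mat_trace_eval_companion_quotient[OF bij_betw_imp_inj_on[OF p] Q(2,1) roots(1) this roots(2)]
  then show "det Mg \<noteq> 0" unfolding Mg_def by simp
  have "Zsum P = (\<Sum>x\<in>root_set P. poly ?f x / poly ?g x)"
    unfolding Q_def by (rule Zsum_eq_sum_roots[OF P])
  also have "\<dots> = (\<Sum>j<m. poly ?f (p j) / poly ?g (p j))"
    by (rule sum.reindex_bij_betw[OF p, symmetric])
  finally show "Zsum P = mat_trace (Mf * adj_mat Mg) / det Mg"
    using trace unfolding Mf_def Mg_def by simp
qed

lemma rational_in_coeffs_Zsum:
  "rational_in_coeffs (Suc n) (polys_with_pattern n R) Zsum"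
proof -
  let ?S = "polys_with_pattern n R" and ?m = "size R"
  let ?Q = "\<lambda>P. squarefree_part P"
  let ?Mf = "\<lambda>P. eval_companion (?Q P) ?m (pderiv (pderiv (?Q P))) ?m"
  let ?Mg = "\<lambda>P. eval_companion (?Q P) ?m (Polynomial.smult 2 (deriv_cofactor P)) ?m"
  note Q = rational_in_coeffs_coeff_squarefree_part
  have "rational_in_coeffs (Suc n) ?S (\<lambda>P. coeff (pderiv (pderiv (?Q P))) c)" for c
    by (rule rational_in_coeffs_cong[OF rational_in_coeffs_mult[OF
          rational_in_coeffs_const[of _ _ "(1 + real c) * (2 + real c)"] Q[where c = "Suc (Suc c)"]]])
      (simp add: coeff_pderiv)
  then have Mf: "rational_mat (Suc n) ?S ?m ?Mf"
    by (intro rational_mat_eval_companion Q)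
  have Mg: "rational_mat (Suc n) ?S ?m ?Mg"
    by (intro rational_mat_eval_companion Q rational_in_coeffs_cong[OF rational_in_coeffs_mult[OF
          rational_in_coeffs_const rational_in_coeffs_coeff_deriv_cofactor]]) simp
  have "det (?Mg P) \<noteq> 0" "Zsum P = mat_trace (?Mf P * adj_mat (?Mg P)) / det (?Mg P)"
    if "P \<in> ?S" for P
    using Zsum_eq_trace_eval_companion[OF polys_with_patternD(1)[OF that]] polys_with_patternD(4)[OF that]
    by simp_all
  then show ?thesis
    by (intro rational_in_coeffs_cong[OF rational_in_coeffs_divide[OF rational_in_coeffs_trace[OF
          rational_mat_mult[OF Mf rational_mat_adj[OF Mg]]] rational_in_coeffs_det[OF Mg]]]) simp_all
qed

theorem corollary3:
  fixes n :: nat and R :: "nat multiset"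
  shows "\<exists>A B. poly_fun (Suc n) A \<and> poly_fun (Suc n) B \<and>
           (\<forall>P :: real poly. P \<noteq> 0 \<and> degree P = n \<and> real_rooted P \<and> mult_pattern P = R \<longrightarrow>
              B (coeff P) \<noteq> 0 \<and> Zsum P = A (coeff P) / B (coeff P))"
  using rational_in_coeffs_Zsum[of n R] unfolding rational_in_coeffs_def polys_with_pattern_def by auto

end
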